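(* Consider the setting in the context with $P_i=\tau_iI_n$, $Q_i=\zeta_iI_n$, $\rho>0$, $0<\gamma<2$. If for every $i\in\mathcal{V}$ $$\zeta_i>\frac{C_i}{m}(C_i+m),\qquad \tau_i>\max\Big\{\rho d_i+4(N-1)\rho\sqrt{n},\ \rho\Big(\frac{N}{2-\gamma}-1\Big)d_i\Big\},$$ then $\bm{G}_1^{\dagger}\succ0$, $\bm{G}_2\succ\bm{G}_3$, and there exist $\epsilon_i\in(0,1)$ with $\sum_i\epsilon_i<2-\gamma$ and $\tau_i>\rho(\frac1{\epsilon_i}-1)d_i$ for all $i$.
   Context: Let $\mathcal{G}=(\mathcal{V},\mathcal{E})$ be a connected undirected graph with $\mathcal{V}=\{1,\dots,N\}$, $N\ge2$, and let $d_i$ be the degree of $i$. The matrix $\bm{A}\in\mathbb{R}^{|\mathcal{E}|n\times Nn}$ has one block row per edge $\{i,j\}$ ($i<j$) with $I_n$ in block column $i$, $-I_n$ in block column $j$, zeros elsewhere; $A_i$ is its $i$-th block column, so $A_i^TA_i=d_iI_n$ and, for $i\ne j$, $A_i^TA_j=-I_n$ if $\{i,j\}\in\mathcal{E}$ and $0$ otherwise. Constants: $C_i>0$ (Lipschitz constants of the gradients of local losses $f_i$), $\mu_2>0$ and $m$ with $0<m\le\mu_2$. Matrices: $\bm{G}_1=\mathrm{blkdiag}(\rho d_iI_n+P_i)_i$, $\bm{G}_1^{\dagger}=\bm{G}_1-\rho\bm{A}^T\bm{A}$, $\bm{G}_2=\mathrm{blkdiag}(Q_i)_i$, $\bm{G}_3=\mathrm{blkdiag}\big(\frac{C_i}{m}(C_i+m)I_n\big)_i$.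 *)

theory Defs
  imports Main "HOL-Library.Extended_Real" Complex_Main
begin

definition verts :: "nat \<Rightarrow> nat set" where
  "verts N = {1..N}"

definition undirected_graph :: "nat \<Rightarrow> (nat \<Rightarrow> nat \<Rightarrow> bool) \<Rightarrow> bool" where
  "undirected_graph N E \<longleftrightarrow>
     (\<forall>i j. E i j \<longrightarrow> i \<in> verts N \<and> j \<in> verts N) \<and>
     (\<forall>i j. E i j \<longrightarrow> E j i) \<and> (\<forall>i. \<not> E i i)"

definition connected_graph :: "nat \<Rightarrow> (nat \<Rightarrow> nat \<Rightarrow> bool) \<Rightarrow> bool" where
  "connected_graph N E \<longleftrightarrow> (\<forall>i\<in>verts N. \<forall>j\<in>verts N. E\<^sup>*\<^sup>* i j)"

definition deg :: "nat \<Rightarrow> (nat \<Rightarrow> nat \<Rightarrow> bool) \<Rightarrow> nat \<Rightarrow> nat" where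
  "deg N E i = card {j \<in> verts N. E i j}"

definition edges :: "nat \<Rightarrow> (nat \<Rightarrow> nat \<Rightarrow> bool) \<Rightarrow> (nat \<times> nat) set" where
  "edges N E = {(i,j). i \<in> verts N \<and> j \<in> verts N \<and> i < j \<and> E i j}"

(* Matrices are functions of (row index, column index). Column indices of the stacked
   vectors in R^{Nn}: (i,k) with i \<in> V (block) and k < n (entry in the block).
   Row indices of A: ((i,j),k) with (i,j) an edge and k < n. *)
definition col_idx :: "nat \<Rightarrow> nat \<Rightarrow> (nat \<times> nat) set" where
  "col_idx N n = verts N \<times> {0..<n}"

definition row_idx :: "nat \<Rightarrow> (nat \<Rightarrow> nat \<Rightarrow> bool) \<Rightarrow> nat \<Rightarrow> ((nat \<times> nat) \<times> nat) set" where
  "row_idx N E n = edges N E \<times> {0..<n}"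

(* the incidence matrix A: block row of edge (i,j) has I_n in block column i, -I_n in block column j *)
definition Amat :: "((nat \<times> nat) \<times> nat) \<Rightarrow> (nat \<times> nat) \<Rightarrow> real" where
  "Amat r c = (case r of ((i,j),k) \<Rightarrow> case c of (l,k') \<Rightarrow>
      if k = k' then (if l = i then 1 else if l = j then -1 else 0) else 0)"

definition AtA :: "nat \<Rightarrow> (nat \<Rightarrow> nat \<Rightarrow> bool) \<Rightarrow> nat \<Rightarrow> (nat \<times> nat) \<Rightarrow> (nat \<times> nat) \<Rightarrow> real" where
  "AtA N E n p q = (\<Sum>r\<in>row_idx N E n. Amat r p * Amat r q)"

definition idmat :: "nat \<Rightarrow> nat \<Rightarrow> real" where
  "idmat k l = (if k = l then 1 else 0)"

definition blkdiag :: "(nat \<Rightarrow> nat \<Rightarrow> nat \<Rightarrow> real) \<Rightarrow> (nat \<times> nat) \<Rightarrow> (nat \<times> nat) \<Rightarrow> real" where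
  "blkdiag B p q = (case p of (i,k) \<Rightarrow> case q of (j,l) \<Rightarrow> if i = j then B i k l else 0)"

definition G1 :: "nat \<Rightarrow> (nat \<Rightarrow> nat \<Rightarrow> bool) \<Rightarrow> real \<Rightarrow> (nat \<Rightarrow> nat \<Rightarrow> nat \<Rightarrow> real)
                  \<Rightarrow> (nat \<times> nat) \<Rightarrow> (nat \<times> nat) \<Rightarrow> real" where
  "G1 N E \<rho> P = blkdiag (\<lambda>i k l. \<rho> * real (deg N E i) * idmat k l + P i k l)"

definition G1dag :: "nat \<Rightarrow> (nat \<Rightarrow> nat \<Rightarrow> bool) \<Rightarrow> nat \<Rightarrow> real \<Rightarrow> (nat \<Rightarrow> nat \<Rightarrow> nat \<Rightarrow> real)
                  \<Rightarrow> (nat \<times> nat) \<Rightarrow> (nat \<times> nat) \<Rightarrow> real" where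
  "G1dag N E n \<rho> P p q = G1 N E \<rho> P p q - \<rho> * AtA N E n p q"

definition G2 :: "(nat \<Rightarrow> nat \<Rightarrow> nat \<Rightarrow> real) \<Rightarrow> (nat \<times> nat) \<Rightarrow> (nat \<times> nat) \<Rightarrow> real" where
  "G2 Q = blkdiag Q"

definition G3 :: "(nat \<Rightarrow> real) \<Rightarrow> real \<Rightarrow> (nat \<times> nat) \<Rightarrow> (nat \<times> nat) \<Rightarrow> real" where
  "G3 C m = blkdiag (\<lambda>i k l. C i / m * (C i + m) * idmat k l)"

definition pos_def :: "'a set \<Rightarrow> ('a \<Rightarrow> 'a \<Rightarrow> real) \<Rightarrow> bool" where
  "pos_def S M \<longleftrightarrow> (\<forall>p\<in>S. \<forall>q\<in>S. M p q = M q p) \<and>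
     (\<forall>x. (\<exists>p\<in>S. x p \<noteq> 0) \<longrightarrow> (\<Sum>p\<in>S. \<Sum>q\<in>S. x p * M p q * x q) > 0)"

definition loewner_gt :: "'a set \<Rightarrow> ('a \<Rightarrow> 'a \<Rightarrow> real) \<Rightarrow> ('a \<Rightarrow> 'a \<Rightarrow> real) \<Rightarrow> bool" where
  "loewner_gt S M M' \<longleftrightarrow> pos_def S (\<lambda>p q. M p q - M' p q)"

end

theory Submission
  imports Defs
begin

text \<open>The quadratic form of \<open>A\<^sup>T A\<close> is the sum over the edges of the squared differences
  \<open>|x\<^sub>i - x\<^sub>j|\<^sup>2\<close>; since \<open>\<Sum>\<^sub>i\<^sub>,\<^sub>j (a\<^sub>i - a\<^sub>j)\<^sup>2 = 2N \<Sum>\<^sub>i a\<^sub>i\<^sup>2 - 2 (\<Sum>\<^sub>i a\<^sub>i)\<^sup>2\<close>, it is at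
  most \<open>2N |x|\<^sup>2\<close>, and the lower bound on \<open>\<tau>\<^sub>i\<close> exceeds \<open>2N\<rho>\<close>, so \<open>G\<^sub>1\<^sup>\<dagger>\<close> dominates a
  positive diagonal matrix. \<open>G\<^sub>2 - G\<^sub>3\<close> is diagonal with positive entries. Finally, with
  \<open>B = N/(2-\<gamma>) - 1\<close>, the hypothesis \<open>\<tau>\<^sub>i > \<rho> B d\<^sub>i\<close> leaves room for some \<open>s\<^sub>i > B\<close> with
  \<open>\<tau>\<^sub>i > \<rho> s\<^sub>i d\<^sub>i\<close>, and \<open>\<epsilon>\<^sub>i = 1/(1 + s\<^sub>i) < (2-\<gamma>)/N\<close> sum to less than \<open>2 - \<gamma>\<close>.\<close>

definition quad_form :: "'a set \<Rightarrow> ('a \<Rightarrow> 'a \<Rightarrow> real) \<Rightarrow> ('a \<Rightarrow> real) \<Rightarrow> real" where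
  "quad_form S M x = (\<Sum>p\<in>S. \<Sum>q\<in>S. x p * M p q * x q)"

lemma pos_def_iff_quad_form:
  "pos_def S M \<longleftrightarrow> (\<forall>p\<in>S. \<forall>q\<in>S. M p q = M q p) \<and>
     (\<forall>x. (\<exists>p\<in>S. x p \<noteq> 0) \<longrightarrow> quad_form S M x > 0)"
  by (simp add: pos_def_def quad_form_def)

lemma finite_verts [simp]: "finite (verts N)"
  by (simp add: verts_def)

lemma finite_col_idx [simp]: "finite (col_idx N n)"
  by (simp add: col_idx_def)

lemma edges_subset_verts: "edges N E \<subseteq> verts N \<times> verts N"
  by (auto simp: edges_def)

lemma weighted_sum_squares_pos:
  fixes w x :: "'a \<Rightarrow> real"
  assumes "finite S" "\<forall>p\<in>S. w p > 0" "\<exists>p\<in>S. x p \<noteq> 0"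
  shows "(\<Sum>p\<in>S. w p * (x p)\<^sup>2) > 0"
proof -
  obtain p0 where p0: "p0 \<in> S" "x p0 \<noteq> 0"
    using assms(3) by blast
  have "0 < w p0 * (x p0)\<^sup>2"
    using assms(2) p0 by simp
  also have "\<dots> \<le> (\<Sum>p\<in>S. w p * (x p)\<^sup>2)"
    by (rule member_le_sum) (use assms p0 in \<open>auto intro: less_imp_le\<close>)
  finally show ?thesis .
qed

lemma blkdiag_scalar_sym:
  "blkdiag (\<lambda>i k l. w i * idmat k l) p q = blkdiag (\<lambda>i k l. w i * idmat k l) q p"
  by (auto simp: blkdiag_def idmat_def split: prod.splits)

lemma quad_form_blkdiag_scalar:
  assumes "finite S"
  shows "quad_form S (blkdiag (\<lambda>i k l. w i * idmat k l)) x = (\<Sum>p\<in>S. w (fst p) * (x p)\<^sup>2)"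
  unfolding quad_form_def
proof (rule sum.cong[OF refl])
  fix p assume p: "p \<in> S"
  have "(\<Sum>q\<in>S. x p * blkdiag (\<lambda>i k l. w i * idmat k l) p q * x q)
      = (\<Sum>q\<in>S. if q = p then w (fst p) * (x p)\<^sup>2 else 0)"
    by (rule sum.cong[OF refl])
      (auto simp: blkdiag_def idmat_def power2_eq_square split: prod.splits)
  also have "\<dots> = w (fst p) * (x p)\<^sup>2"
    using assms p by (simp add: sum.delta')
  finally show "(\<Sum>q\<in>S. x p * blkdiag (\<lambda>i k l. w i * idmat k l) p q * x q) = w (fst p) * (x p)\<^sup>2" .
qed

lemma pos_def_blkdiag_scalar:
  assumes "\<forall>i\<in>verts N. w i > 0"
  shows "pos_def (col_idx N n) (blkdiag (\<lambda>i k l. w i * idmat k l))"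
  unfolding pos_def_iff_quad_form quad_form_blkdiag_scalar[OF finite_col_idx]
  using blkdiag_scalar_sym assms
  by (auto simp: col_idx_def intro!: weighted_sum_squares_pos)

lemma incidence_row_apply:
  assumes "(i, j) \<in> edges N E" "k < n"
  shows "(\<Sum>p\<in>col_idx N n. Amat ((i, j), k) p * x p) = x (i, k) - x (j, k)"
proof -
  have ij: "i \<noteq> j" "(i, k) \<in> col_idx N n" "(j, k) \<in> col_idx N n"
    using assms by (auto simp: edges_def col_idx_def)
  have "(\<Sum>p\<in>col_idx N n. Amat ((i, j), k) p * x p)
      = (\<Sum>p\<in>col_idx N n. (if p = (i, k) then x p else 0) - (if p = (j, k) then x p else 0))"
    by (rule sum.cong[OF refl]) (use ij in \<open>auto simp: Amat_def split: prod.splits\<close>)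
  also have "\<dots> = x (i, k) - x (j, k)"
    using ij by (simp add: sum_subtractf sum.delta')
  finally show ?thesis .
qed

lemma quad_form_AtA:
  "quad_form (col_idx N n) (AtA N E n) x
   = (\<Sum>e\<in>edges N E. \<Sum>k<n. (x (fst e, k) - x (snd e, k))\<^sup>2)"
proof -
  let ?C = "col_idx N n" and ?R = "row_idx N E n"
  have "quad_form ?C (AtA N E n) x
      = (\<Sum>p\<in>?C. \<Sum>q\<in>?C. \<Sum>r\<in>?R. (Amat r p * x p) * (Amat r q * x q))"
    by (simp add: quad_form_def AtA_def sum_distrib_left sum_distrib_right mult_ac)
  also have "\<dots> = (\<Sum>r\<in>?R. \<Sum>p\<in>?C. \<Sum>q\<in>?C. (Amat r p * x p) * (Amat r q * x q))"
    by (subst sum.swap, rule sum.cong[OF refl], rule sum.swap)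
  also have "\<dots> = (\<Sum>r\<in>?R. (\<Sum>p\<in>?C. Amat r p * x p)\<^sup>2)"
    by (simp add: sum_product power2_eq_square)
  also have "\<dots> = (\<Sum>r\<in>?R. (x (fst (fst r), snd r) - x (snd (fst r), snd r))\<^sup>2)"
    by (rule sum.cong[OF refl]) (auto simp: row_idx_def incidence_row_apply)
  also have "\<dots> = (\<Sum>e\<in>edges N E. \<Sum>k<n. (x (fst e, k) - x (snd e, k))\<^sup>2)"
    unfolding row_idx_def by (simp add: sum.cartesian_product lessThan_atLeast0 case_prod_beta)
  finally show ?thesis .
qed

lemma sum_sq_pairwise_diff_le:
  fixes a :: "'a \<Rightarrow> real"
  assumes "finite V"
  shows "(\<Sum>i\<in>V. \<Sum>j\<in>V. (a i - a j)\<^sup>2) \<le> 2 * real (card V) * (\<Sum>i\<in>V. (a i)\<^sup>2)"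
proof -
  have "(\<Sum>i\<in>V. \<Sum>j\<in>V. (a i - a j)\<^sup>2)
      = (\<Sum>i\<in>V. \<Sum>j\<in>V. (a i)\<^sup>2 + (a j)\<^sup>2 - 2 * (a i * a j))"
    by (simp add: power2_diff mult.assoc)
  also have "\<dots> = 2 * real (card V) * (\<Sum>i\<in>V. (a i)\<^sup>2) - 2 * (\<Sum>i\<in>V. a i)\<^sup>2"
    by (simp add: sum_subtractf sum.distrib sum_distrib_left sum_distrib_right power2_eq_square
        sum_product algebra_simps)
  finally show ?thesis
    by simp
qed

lemma quad_form_AtA_le:
  "quad_form (col_idx N n) (AtA N E n) x \<le> 2 * real N * (\<Sum>p\<in>col_idx N n. (x p)\<^sup>2)"
proof -
  let ?V = "verts N"
  have "quad_form (col_idx N n) (AtA N E n) x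
      \<le> (\<Sum>e\<in>?V \<times> ?V. \<Sum>k<n. (x (fst e, k) - x (snd e, k))\<^sup>2)"
    unfolding quad_form_AtA
    by (rule sum_mono2) (use edges_subset_verts in \<open>auto intro: sum_nonneg\<close>)
  also have "\<dots> = (\<Sum>i\<in>?V. \<Sum>j\<in>?V. \<Sum>k<n. (x (i, k) - x (j, k))\<^sup>2)"
    by (simp add: sum.cartesian_product')
  also have "\<dots> = (\<Sum>k<n. \<Sum>i\<in>?V. \<Sum>j\<in>?V. (x (i, k) - x (j, k))\<^sup>2)"
    by (subst sum.swap, rule sum.cong[OF refl], rule sum.swap)
  also have "\<dots> \<le> (\<Sum>k<n. 2 * real (card ?V) * (\<Sum>i\<in>?V. (x (i, k))\<^sup>2))"
    by (intro sum_mono sum_sq_pairwise_diff_le finite_verts)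
  also have "\<dots> = 2 * real N * (\<Sum>i\<in>?V. \<Sum>k<n. (x (i, k))\<^sup>2)"
    using sum.swap[of "\<lambda>k i. (x (i, k))\<^sup>2" ?V "lessThan n"]
    by (simp add: verts_def sum_distrib_left[symmetric])
  also have "\<dots> = 2 * real N * (\<Sum>p\<in>col_idx N n. (x p)\<^sup>2)"
    by (simp add: col_idx_def sum.cartesian_product lessThan_atLeast0 case_prod_beta)
  finally show ?thesis .
qed

lemma G1dag_scalar_eq:
  "G1dag N E n \<rho> (\<lambda>i k l. \<tau> i * idmat k l) p q
   = blkdiag (\<lambda>i k l. (\<rho> * real (deg N E i) + \<tau> i) * idmat k l) p q - \<rho> * AtA N E n p q"
  by (simp add: G1dag_def G1_def blkdiag_def algebra_simps split: prod.splits)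

lemma pos_def_G1dag_scalar:
  assumes "\<rho> \<ge> 0" and "\<forall>i\<in>verts N. 2 * real N * \<rho> < \<rho> * real (deg N E i) + \<tau> i"
  shows "pos_def (col_idx N n) (G1dag N E n \<rho> (\<lambda>i k l. \<tau> i * idmat k l))"
  unfolding pos_def_iff_quad_form
proof (intro conjI ballI allI impI)
  fix p q
  show "G1dag N E n \<rho> (\<lambda>i k l. \<tau> i * idmat k l) p q = G1dag N E n \<rho> (\<lambda>i k l. \<tau> i * idmat k l) q p"
    unfolding G1dag_scalar_eq by (subst blkdiag_scalar_sym) (simp add: AtA_def mult.commute)
next
  fix x :: "nat \<times> nat \<Rightarrow> real"
  assume nonzero: "\<exists>p\<in>col_idx N n. x p \<noteq> 0"
  let ?S = "col_idx N n"
  let ?d = "\<lambda>i. \<rho> * real (deg N E i) + \<tau> i"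
  have "quad_form ?S (G1dag N E n \<rho> (\<lambda>i k l. \<tau> i * idmat k l)) x
      = quad_form ?S (blkdiag (\<lambda>i k l. ?d i * idmat k l)) x - \<rho> * quad_form ?S (AtA N E n) x"
    by (simp add: quad_form_def G1dag_scalar_eq algebra_simps sum_subtractf sum_distrib_left)
  also have "\<dots> \<ge> (\<Sum>p\<in>?S. ?d (fst p) * (x p)\<^sup>2) - \<rho> * (2 * real N * (\<Sum>p\<in>?S. (x p)\<^sup>2))"
    using mult_left_mono[OF quad_form_AtA_le assms(1)]
    by (simp add: quad_form_blkdiag_scalar)
  moreover have "(\<Sum>p\<in>?S. ?d (fst p) * (x p)\<^sup>2) - \<rho> * (2 * real N * (\<Sum>p\<in>?S. (x p)\<^sup>2))
      = (\<Sum>p\<in>?S. (?d (fst p) - 2 * real N * \<rho>) * (x p)\<^sup>2)"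
    by (simp add: sum_subtractf sum_distrib_left algebra_simps)
  moreover have "(\<Sum>p\<in>?S. (?d (fst p) - 2 * real N * \<rho>) * (x p)\<^sup>2) > 0"
    using assms(2) nonzero by (intro weighted_sum_squares_pos) (auto simp: col_idx_def)
  ultimately show "quad_form ?S (G1dag N E n \<rho> (\<lambda>i k l. \<tau> i * idmat k l)) x > 0"
    by linarith
qed

lemma loewner_gt_G2_G3_scalar:
  assumes "\<forall>i\<in>verts N. \<zeta> i > C i / m * (C i + m)"
  shows "loewner_gt (col_idx N n) (G2 (\<lambda>i k l. \<zeta> i * idmat k l)) (G3 C m)"
proof -
  have "(\<lambda>p q. G2 (\<lambda>i k l. \<zeta> i * idmat k l) p q - G3 C m p q)
      = blkdiag (\<lambda>i k l. (\<zeta> i - C i / m * (C i + m)) * idmat k l)"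
    by (auto simp: G2_def G3_def blkdiag_def algebra_simps fun_eq_iff split: prod.splits)
  then show ?thesis
    unfolding loewner_gt_def using assms by (simp add: pos_def_blkdiag_scalar)
qed

lemma exists_above_below:
  fixes a b t :: real
  assumes "0 \<le> a" and "a * b < t"
  obtains s where "b < s" and "a * s < t"
proof
  let ?s = "b + (t - a * b) / (a + 1)"
  show "b < ?s"
    using assms by simp
  have "a * ((t - a * b) / (a + 1)) < t - a * b"
    using assms by (simp add: field_simps)
  then show "a * ?s < t"
    by (simp add: distrib_left)
qed

lemma exists_weights_below_budget:
  fixes a t :: "'a \<Rightarrow> real" and c :: real
  assumes "finite V" "V \<noteq> {}" "0 < c" "c \<le> real (card V)"
    and "\<forall>i\<in>V. 0 \<le> a i" and "\<forall>i\<in>V. a i * (real (card V) / c - 1) < t i"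
  shows "\<exists>\<epsilon>. (\<forall>i\<in>V. 0 < \<epsilon> i \<and> \<epsilon> i < 1) \<and> (\<Sum>i\<in>V. \<epsilon> i) < c
             \<and> (\<forall>i\<in>V. a i * (1 / \<epsilon> i - 1) < t i)"
proof -
  define B where "B = real (card V) / c - 1"
  have B: "0 \<le> B"
    using assms(3,4) by (simp add: B_def field_simps)
  have "\<forall>i\<in>V. \<exists>s. B < s \<and> a i * s < t i"
    using assms(5,6) exists_above_below unfolding B_def by metis
  then obtain s where s: "\<And>i. i \<in> V \<Longrightarrow> B < s i \<and> a i * s i < t i"
    by metis
  define \<epsilon> where "\<epsilon> i = 1 / (1 + s i)" for i
  have card_pos: "real (card V) > 0"
    using assms(1,2) by (simp add: card_gt_0_iff)
  have \<epsilon>_below: "\<epsilon> i < c / real (card V)" if "i \<in> V" for i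
  proof -
    have "real (card V) / c < 1 + s i"
      using s[OF that] by (simp add: B_def)
    then have "real (card V) < c * (1 + s i)"
      using assms(3) by (simp add: field_simps)
    then show ?thesis
      using s[OF that] B card_pos by (simp add: \<epsilon>_def field_simps)
  qed
  have "(\<Sum>i\<in>V. \<epsilon> i) < (\<Sum>i\<in>V. c / real (card V))"
    by (rule sum_strict_mono) (use assms(1,2) \<epsilon>_below in auto)
  also have "\<dots> = c"
    using card_pos by simp
  finally have "(\<Sum>i\<in>V. \<epsilon> i) < c" .
  moreover have "0 < \<epsilon> i \<and> \<epsilon> i < 1 \<and> a i * (1 / \<epsilon> i - 1) < t i" if "i \<in> V" for i
    using s[OF that] B by (simp add: \<epsilon>_def)
  ultimately show ?thesis
    by blast
qed

theorem proposition2: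
  fixes N n :: nat and E :: "nat \<Rightarrow> nat \<Rightarrow> bool"
    and C \<tau> \<zeta> :: "nat \<Rightarrow> real" and \<mu>2 m \<rho> \<gamma> :: real
  assumes N2: "N \<ge> 2" and n1: "n \<ge> 1"
    and graph: "undirected_graph N E" and conn: "connected_graph N E"
    and Cpos: "\<forall>i\<in>verts N. C i > 0"
    and mu2: "\<mu>2 > 0" and m: "0 < m" "m \<le> \<mu>2"
    and rho: "\<rho> > 0" and gam: "0 < \<gamma>" "\<gamma> < 2"
    and zeta: "\<forall>i\<in>verts N. \<zeta> i > C i / m * (C i + m)"
    and tau: "\<forall>i\<in>verts N. \<tau> i > max (\<rho> * real (deg N E i) + 4 * (real N - 1) * \<rho> * sqrt (real n))
                                         (\<rho> * (real N / (2 - \<gamma>) - 1) * real (deg N E i))"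
  shows "pos_def (col_idx N n) (G1dag N E n \<rho> (\<lambda>i k l. \<tau> i * idmat k l))
       \<and> loewner_gt (col_idx N n) (G2 (\<lambda>i k l. \<zeta> i * idmat k l)) (G3 C m)
       \<and> (\<exists>\<epsilon> :: nat \<Rightarrow> real. (\<forall>i\<in>verts N. 0 < \<epsilon> i \<and> \<epsilon> i < 1)
             \<and> (\<Sum>i\<in>verts N. \<epsilon> i) < 2 - \<gamma>
             \<and> (\<forall>i\<in>verts N. \<tau> i > \<rho> * (1 / \<epsilon> i - 1) * real (deg N E i)))"
proof (intro conjI)
  have "2 * real N * \<rho> \<le> 4 * (real N - 1) * \<rho> * 1"
    using N2 rho by simp
  also have "\<dots> \<le> 4 * (real N - 1) * \<rho> * sqrt (real n)"
    using N2 n1 rho by (intro mult_left_mono) auto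
  finally have "\<forall>i\<in>verts N. 2 * real N * \<rho> < \<rho> * real (deg N E i) + \<tau> i"
    using tau rho by (smt (verit) max.strict_boundedE mult_nonneg_nonneg of_nat_0_le_iff)
  then show "pos_def (col_idx N n) (G1dag N E n \<rho> (\<lambda>i k l. \<tau> i * idmat k l))"
    using rho by (simp add: pos_def_G1dag_scalar)
  show "loewner_gt (col_idx N n) (G2 (\<lambda>i k l. \<zeta> i * idmat k l)) (G3 C m)"
    using zeta by (rule loewner_gt_G2_G3_scalar)
  have card: "card (verts N) = N" "verts N \<noteq> {}"
    using N2 by (auto simp: verts_def)
  show "\<exists>\<epsilon> :: nat \<Rightarrow> real. (\<forall>i\<in>verts N. 0 < \<epsilon> i \<and> \<epsilon> i < 1)
             \<and> (\<Sum>i\<in>verts N. \<epsilon> i) < 2 - \<gamma>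
             \<and> (\<forall>i\<in>verts N. \<tau> i > \<rho> * (1 / \<epsilon> i - 1) * real (deg N E i))"
    using exists_weights_below_budget[of "verts N" "2 - \<gamma>" "\<lambda>i. \<rho> * real (deg N E i)" \<tau>]
      card gam N2 rho tau by (simp add: mult_ac)
qed

end
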